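(* Let $k\ge 2$ be an integer. Then $S_{3,2}(k;k)=k^2-k-1$.
   Context: Let $k,r$ be positive integers with $r\mid k$. A solution to $\mathcal{E}$ is a $k$-tuple $(x_1,\dots,x_k)$ of positive integers (not necessarily distinct) with $\sum_{i=1}^{k-1}x_i=x_k$; it lies in $[1,n]$ if all $x_i\in\{1,\dots,n\}$. Given a coloring $\chi$ of $[1,n]$ with colors in $\{0,1\}$ (viewed as integers), a solution is $r$-zero-sum if $\sum_{i=1}^k\chi(x_i)\equiv 0\pmod r$. $S_{3,2}(k;r)$ denotes the least positive integer $n$ such that every coloring $\chi:[1,n]\to\{0,1\}$ admits an $r$-zero-sum solution to $\mathcal{E}$ in $[1,n]$. *)

theory Defs
  imports Main
begin

definition is_solution_in :: "nat \<Rightarrow> nat \<Rightarrow> (nat \<Rightarrow> nat) \<Rightarrow> bool" where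
  "is_solution_in k n x \<longleftrightarrow>
     (\<forall>i\<in>{1..k}. x i \<in> {1..n}) \<and> (\<Sum>i=1..k-1. x i) = x k"

definition zero_sum :: "nat \<Rightarrow> nat \<Rightarrow> (nat \<Rightarrow> nat) \<Rightarrow> (nat \<Rightarrow> nat) \<Rightarrow> bool" where
  "zero_sum k r \<chi> x \<longleftrightarrow> (\<Sum>i=1..k. \<chi> (x i)) mod r = 0"

definition is_coloring :: "nat \<Rightarrow> (nat \<Rightarrow> nat) \<Rightarrow> bool" where
  "is_coloring n \<chi> \<longleftrightarrow> (\<forall>i\<in>{1..n}. \<chi> i \<in> {0,1})"

definition S32 :: "nat \<Rightarrow> nat \<Rightarrow> nat" where
  "S32 k r = (LEAST n. n > 0 \<and>
     (\<forall>\<chi>. is_coloring n \<chi> \<longrightarrow> (\<exists>x. is_solution_in k n x \<and> zero_sum k r \<chi> x)))"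

end

theory Submission
  imports Defs
begin

text \<open>With colours in {0,1}, the colours of the k entries of a solution sum to a multiple of k
  exactly when the solution is monochromatic, so with m = k - 1 the number in question is the
  2-colour Rado number of x_1 + ... + x_m = y, namely m^2 + m - 1.
  Colouring exactly [m, m^2 - 1] with colour 1 shows sharpness: a solution inside that
  block has y \<ge> m^2, and a solution avoiding it either has all summands below m, whence
  m \<le> y < m^2, or has a summand \<ge> m^2, whence y \<ge> m^2 + m - 1.
  Conversely it suffices to use solutions whose summands take two values, (m - 1) p + q = y:
  seven such triples in [1, m^2 + m - 1] cannot all be non-monochromatic.\<close>

definition monochromatic :: "nat \<Rightarrow> (nat \<Rightarrow> nat) \<Rightarrow> (nat \<Rightarrow> nat) \<Rightarrow> bool" where
  "monochromatic k \<chi> x \<longleftrightarrow> (\<exists>c. \<forall>i\<in>{1..k}. \<chi> (x i) = c)"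

lemma zero_sum_iff_monochromatic:
  assumes "is_coloring n \<chi>" and "\<forall>i\<in>{1..k}. x i \<in> {1..n}"
  shows "zero_sum k k \<chi> x \<longleftrightarrow> monochromatic k \<chi> x"
proof
  have binary: "\<forall>i\<in>{1..k}. \<chi> (x i) \<le> 1"
    using assms by (force simp: is_coloring_def)
  define s where "s = (\<Sum>i=1..k. \<chi> (x i))"
  have "s \<le> k"
    unfolding s_def using sum_bounded_above[of "{1..k}" "\<lambda>i. \<chi> (x i)" 1] binary by simp
  assume "zero_sum k k \<chi> x"
  then have "k dvd s" by (simp add: zero_sum_def s_def mod_0_imp_dvd)
  with \<open>s \<le> k\<close> have "s = 0 \<or> s = k"
    by (metis dvd_imp_le le_antisym not_gr_zero)
  then show "monochromatic k \<chi> x"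
  proof
    assume "s = 0"
    then show ?thesis by (auto simp: s_def monochromatic_def)
  next
    assume "s = k"
    have "(\<Sum>i=1..k. 1 - \<chi> (x i)) = k - s"
      unfolding s_def using sum_subtractf_nat[of "{1..k}" "\<lambda>i. \<chi> (x i)" "\<lambda>_. 1"] binary
      by simp
    with \<open>s = k\<close> have "\<forall>i\<in>{1..k}. 1 - \<chi> (x i) = 0"
      by simp
    with binary have "\<forall>i\<in>{1..k}. \<chi> (x i) = 1"
      by (metis diff_is_0_eq le_antisym)
    then show ?thesis by (auto simp: monochromatic_def)
  qed
next
  assume "monochromatic k \<chi> x"
  then obtain c where "\<forall>i\<in>{1..k}. \<chi> (x i) = c"
    by (auto simp: monochromatic_def)
  then have "(\<Sum>i=1..k. \<chi> (x i)) = k * c"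
    by simp
  then show "zero_sum k k \<chi> x" by (simp add: zero_sum_def)
qed

lemma solution_from_two_values:
  assumes "{p, q, y} \<subseteq> {1..n}" and "a * p + b * q = y"
  shows "\<exists>x. is_solution_in (a + b + 1) n x \<and> (\<forall>i\<in>{1..a + b + 1}. x i \<in> {p, q, y})"
proof -
  define x where "x i = (if i \<le> a then p else if i \<le> a + b then q else y)" for i
  have "(\<Sum>i=1..a + b. x i) = (\<Sum>i=1..a. x i) + (\<Sum>i=a + 1..a + b. x i)"
    by (rule sum.ub_add_nat) simp
  also have "\<dots> = a * p + b * q"
    by (simp add: x_def)
  finally have "(\<Sum>i=1..a + b. x i) = x (a + b + 1)"
    using assms(2) by (simp add: x_def)
  moreover have "\<forall>i\<in>{1..a + b + 1}. x i \<in> {p, q, y}"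
    by (simp add: x_def)
  ultimately show ?thesis
    using assms(1) by (auto simp: is_solution_in_def intro!: exI[of _ x])
qed

lemma monochromatic_two_value_triple:
  fixes m :: nat
  assumes "m \<ge> 1" and "is_coloring (m * m + m - 1) \<chi>"
  shows "\<exists>a b p q y. a + b = m \<and> {p, q, y} \<subseteq> {1..m * m + m - 1} \<and> a * p + b * q = y
           \<and> \<chi> p = \<chi> y \<and> \<chi> q = \<chi> y"
proof (cases "m = 1")
  case True
  then show ?thesis by (intro exI[of _ 0] exI[of _ 1]) simp
next
  case False
  with assms(1) have "m \<ge> 2" by simp
  then obtain j where m: "m = j + 2"
    by (metis add.commute le_add_diff_inverse)
  define N where "N = m * m + m - 1"
  have in_range: "{1, 2, m, 2 * m - 1, m * m - m + 1, m * m, N} \<subseteq> {1..N}"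
    unfolding N_def m by auto
  have arith: "(m - 1) * 1 + 1 = m" "(m - 1) * m + m = m * m" "(m - 1) * 1 + m * m = N"
    "(m - 1) * m + (2 * m - 1) = N" "(m - 1) * 1 + (m * m - m + 1) = m * m"
    "(m - 1) * 2 + (m * m - m + 1) = N" "(m - 1) * 2 + 1 = 2 * m - 1"
    unfolding N_def m by (simp_all add: algebra_simps)
  show ?thesis
  proof (rule ccontr)
    assume none: "\<not> ?thesis"
    have not_mono: "\<chi> p \<noteq> \<chi> y \<or> \<chi> q \<noteq> \<chi> y"
      if "{p, q, y} \<subseteq> {1..N}" and "(m - 1) * p + q = y" for p q y
    proof -
      have "m - 1 + 1 = m" and "(m - 1) * p + 1 * q = y"
        using m that(2) by simp_all
      with that(1) none show ?thesis
        unfolding N_def by blast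
    qed
    have two_colors: "\<chi> u = \<chi> w"
      if "{u, v, w} \<subseteq> {1..N}" and "\<chi> u \<noteq> \<chi> v" and "\<chi> w \<noteq> \<chi> v" for u v w
    proof -
      have "\<chi> u \<in> {0, 1}" "\<chi> v \<in> {0, 1}" "\<chi> w \<in> {0, 1}"
        using that(1) assms(2) unfolding N_def is_coloring_def by auto
      with that(2,3) show ?thesis by auto
    qed
    txt \<open>The triples force \<chi> 1 = \<chi> (m^2) = \<chi> (2m - 1) = \<chi> 2 and
      \<chi> m = \<chi> N = \<chi> (m^2 - m + 1), which makes (2, 1, 2m - 1) monochromatic.\<close>
    have c_m: "\<chi> m \<noteq> \<chi> 1"
      using not_mono[of 1 1 m] in_range arith by auto
    have c_mm: "\<chi> (m * m) = \<chi> 1"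
      using not_mono[of m m "m * m"] two_colors[of "m * m" m 1] c_m in_range arith by auto
    have c_N: "\<chi> N = \<chi> m"
      using not_mono[of 1 "m * m" N] two_colors[of N 1 m] c_m c_mm in_range arith by auto
    have c_2m: "\<chi> (2 * m - 1) = \<chi> 1"
      using not_mono[of m "2 * m - 1" N] two_colors[of "2 * m - 1" m 1] c_m c_N in_range arith
      by auto
    have c_mm1: "\<chi> (m * m - m + 1) = \<chi> m"
      using not_mono[of 1 "m * m - m + 1" "m * m"] two_colors[of "m * m - m + 1" 1 m] c_m c_mm
        in_range arith by auto
    have c_2: "\<chi> 2 = \<chi> 1"
      using not_mono[of 2 "m * m - m + 1" N] two_colors[of 2 m 1] c_m c_N c_mm1 in_range arith
      by auto
    show False
      using not_mono[of 2 1 "2 * m - 1"] c_2 c_2m in_range arith by auto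
  qed
qed

definition gap_coloring :: "nat \<Rightarrow> nat \<Rightarrow> nat" where
  "gap_coloring m i = (if m \<le> i \<and> i < m * m then 1 else 0)"

lemma gap_coloring_no_monochromatic_solution:
  assumes "m \<ge> 1" and "n < m * m + m - 1" and "is_solution_in (m + 1) n x"
  shows "\<not> monochromatic (m + 1) (gap_coloring m) x"
proof
  assume "monochromatic (m + 1) (gap_coloring m) x"
  then obtain c where color: "\<forall>i\<in>{1..m + 1}. gap_coloring m (x i) = c"
    by (auto simp: monochromatic_def)
  from assms(3) have bounds: "\<forall>i\<in>{1..m + 1}. 1 \<le> x i \<and> x i \<le> n"
    and solution: "(\<Sum>i=1..m. x i) = x (m + 1)"
    by (auto simp: is_solution_in_def)
  have "x (m + 1) \<le> n"
    using bounds by simp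
  show False
  proof (cases "c = 1")
    case True
    with color have "\<forall>i\<in>{1..m + 1}. m \<le> x i \<and> x i < m * m"
      unfolding gap_coloring_def by (metis zero_neq_one)
    then have "m * m \<le> (\<Sum>i=1..m. x i)" and "x (m + 1) < m * m"
      using sum_bounded_below[of "{1..m}" m x] by auto
    with solution show False by simp
  next
    case False
    with color have outside: "\<forall>i\<in>{1..m + 1}. x i < m \<or> m * m \<le> x i"
      unfolding gap_coloring_def by (metis not_le)
    consider (large) j where "j \<in> {1..m}" "m * m \<le> x j" | (small) "\<forall>i\<in>{1..m}. x i < m"
      using outside by force
    then show False
    proof cases
      case large
      have "m - 1 \<le> (\<Sum>i\<in>{1..m} - {j}. x i)"
        using sum_bounded_below[of "{1..m} - {j}" 1 x] bounds large(1) by auto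
      moreover have "(\<Sum>i=1..m. x i) = x j + (\<Sum>i\<in>{1..m} - {j}. x i)"
        using large(1) by (simp add: sum.remove)
      ultimately show False
        using solution \<open>x (m + 1) \<le> n\<close> large(2) assms(2) by linarith
    next
      case small
      then have "(\<Sum>i=1..m. x i) < m * m"
        using sum_bounded_above_strict[of "{1..m}" x m] assms(1) by simp
      moreover have "m \<le> (\<Sum>i=1..m. x i)"
        using sum_bounded_below[of "{1..m}" 1 x] bounds by simp
      moreover have "x (m + 1) < m \<or> m * m \<le> x (m + 1)"
        using outside by simp
      ultimately show False
        using solution by linarith
    qed
  qed
qed

lemma zero_sum_solution_exists:
  assumes "m \<ge> 1" and "is_coloring (m * m + m - 1) \<chi>"
  shows "\<exists>x. is_solution_in (m + 1) (m * m + m - 1) x \<and> zero_sum (m + 1) (m + 1) \<chi> x"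
proof -
  obtain a b p q y where "a + b = m" and pqy: "{p, q, y} \<subseteq> {1..m * m + m - 1}"
    and eq: "a * p + b * q = y" and colors: "\<chi> p = \<chi> y" "\<chi> q = \<chi> y"
    using monochromatic_two_value_triple[OF assms] by blast
  then obtain x where x: "is_solution_in (m + 1) (m * m + m - 1) x"
    and x_values: "\<forall>i\<in>{1..m + 1}. x i \<in> {p, q, y}"
    using solution_from_two_values[OF pqy eq] by blast
  have "monochromatic (m + 1) \<chi> x"
    unfolding monochromatic_def using x_values colors by (intro exI[of _ "\<chi> y"]) auto
  moreover have "\<forall>i\<in>{1..m + 1}. x i \<in> {1..m * m + m - 1}"
    using x by (simp add: is_solution_in_def)
  ultimately show ?thesis
    using x zero_sum_iff_monochromatic[OF assms(2)] by blast
qed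

lemma gap_coloring_avoids_zero_sum:
  assumes "m \<ge> 1" and "n < m * m + m - 1"
  shows "is_coloring n (gap_coloring m)"
    and "\<nexists>x. is_solution_in (m + 1) n x \<and> zero_sum (m + 1) (m + 1) (gap_coloring m) x"
proof -
  show coloring: "is_coloring n (gap_coloring m)"
    by (simp add: is_coloring_def gap_coloring_def)
  show "\<nexists>x. is_solution_in (m + 1) n x \<and> zero_sum (m + 1) (m + 1) (gap_coloring m) x"
  proof
    assume "\<exists>x. is_solution_in (m + 1) n x \<and> zero_sum (m + 1) (m + 1) (gap_coloring m) x"
    then obtain x where x: "is_solution_in (m + 1) n x"
      and "zero_sum (m + 1) (m + 1) (gap_coloring m) x"
      by blast
    moreover have "\<forall>i\<in>{1..m + 1}. x i \<in> {1..n}"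
      using x by (simp add: is_solution_in_def)
    ultimately have "monochromatic (m + 1) (gap_coloring m) x"
      using zero_sum_iff_monochromatic[OF coloring] by blast
    with gap_coloring_no_monochromatic_solution[OF assms x] show False ..
  qed
qed

theorem mainTheorem6:
  fixes k :: nat
  assumes "k \<ge> 2"
  shows "S32 k k = k^2 - k - 1"
proof -
  obtain m where k: "k = m + 1" and "m \<ge> 1"
    using assms by (intro that[of "k - 1"]) auto
  have "S32 k k = m * m + m - 1"
    unfolding S32_def k
  proof (rule Least_equality)
    have "0 < m * m + m - 1"
      using \<open>m \<ge> 1\<close> le_square[of m] by linarith
    then show "0 < m * m + m - 1 \<and> (\<forall>\<chi>. is_coloring (m * m + m - 1) \<chi> \<longrightarrow>
            (\<exists>x. is_solution_in (m + 1) (m * m + m - 1) x \<and> zero_sum (m + 1) (m + 1) \<chi> x))"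
      using zero_sum_solution_exists[OF \<open>m \<ge> 1\<close>] by blast
  next
    fix n
    assume "0 < n \<and> (\<forall>\<chi>. is_coloring n \<chi> \<longrightarrow>
              (\<exists>x. is_solution_in (m + 1) n x \<and> zero_sum (m + 1) (m + 1) \<chi> x))"
    then show "m * m + m - 1 \<le> n"
      using gap_coloring_avoids_zero_sum[OF \<open>m \<ge> 1\<close>] not_le by blast
  qed
  then show ?thesis
    unfolding k by (simp add: power2_eq_square)
qed

end
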